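(* Let $1\le p<\infty$ and $E=\mathcal{L}^p(I)$. If $(b_m)$ is a Schauder basis of $E$, then $(b_m-0*_Tb_m)$ is a Schauder sequence in $E$.
   Context: Let $N\ge 2$, $I=[x_0,x_N]$, $\Delta: x_0<\dots<x_N$ a partition, $L_n(x)=a_nx+b_n$ affine with $L_n(x_0)=x_{n-1}$, $L_n(x_N)=x_n$, $I_1=[x_0,x_1]$, $I_n=(x_{n-1},x_n]$ for $n\ge2$, and $\alpha=(\alpha_1,\dots,\alpha_N)\in(\mathcal{L}^\infty(I))^N$ with $\Lambda:=\operatorname{ess\,sup}\{|\alpha_n(x)|:x\in I,n=1,\dots,N\}<1$. For $f,b\in E$, $f*_Tb$ is the unique fixed point in $E$ of the contraction $Tg(x):=f(x)+\alpha_n(L_n^{-1}(x))(g-b)(L_n^{-1}(x))$, $x\in I_n$; $0$ is the null function. A Schauder sequence is a sequence that is a Schauder basis of its closed linear span. *)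

theory Defs
  imports "HOL-Analysis.Analysis" "HOL-Probability.Essential_Supremum"
begin

definition Lp_space :: "real \<Rightarrow> real set \<Rightarrow> (real \<Rightarrow> real) set" where
  "Lp_space p I = {f. f \<in> borel_measurable (lebesgue_on I) \<and>
                      integrable (lebesgue_on I) (\<lambda>y. \<bar>f y\<bar> powr p)}"

definition Lp_norm :: "real \<Rightarrow> real set \<Rightarrow> (real \<Rightarrow> real) \<Rightarrow> real" where
  "Lp_norm p I f = (integral\<^sup>L (lebesgue_on I) (\<lambda>y. \<bar>f y\<bar> powr p)) powr (1 / p)"

(* b is a Schauder basis of the (sub)space S of L^p(I): every element has a unique
   norm-convergent expansion (elements of L^p are taken modulo a.e. equality,
   which the seminorm Lp_norm accounts for) *)
definition schauder_basis_of ::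
  "real \<Rightarrow> real set \<Rightarrow> (real \<Rightarrow> real) set \<Rightarrow> (nat \<Rightarrow> real \<Rightarrow> real) \<Rightarrow> bool" where
  "schauder_basis_of p I S b \<longleftrightarrow> (\<forall>m. b m \<in> S) \<and>
     (\<forall>f\<in>S. \<exists>!c::nat \<Rightarrow> real.
        (\<lambda>n. Lp_norm p I (\<lambda>y. f y - (\<Sum>m<n. c m * b m y))) \<longlonglongrightarrow> 0)"

definition closed_span :: "real \<Rightarrow> real set \<Rightarrow> (nat \<Rightarrow> real \<Rightarrow> real) \<Rightarrow> (real \<Rightarrow> real) set" where
  "closed_span p I b = {f \<in> Lp_space p I. \<forall>e>0. \<exists>n (c::nat \<Rightarrow> real).
        Lp_norm p I (\<lambda>y. f y - (\<Sum>m<n. c m * b m y)) < e}"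

definition schauder_sequence :: "real \<Rightarrow> real set \<Rightarrow> (nat \<Rightarrow> real \<Rightarrow> real) \<Rightarrow> bool" where
  "schauder_sequence p I b \<longleftrightarrow> schauder_basis_of p I (closed_span p I b) b"

(* L_n(t) = a_n t + b_n with L_n(x 0) = x (n-1), L_n(x N) = x n; Linv is its inverse *)
definition Linv :: "(nat \<Rightarrow> real) \<Rightarrow> nat \<Rightarrow> nat \<Rightarrow> real \<Rightarrow> real" where
  "Linv x N n y = x 0 + (y - x (n - 1)) * (x N - x 0) / (x n - x (n - 1))"

(* index n with y \<in> I_n, where I_1 = [x 0, x 1], I_n = (x (n-1), x n] *)
definition part_index :: "(nat \<Rightarrow> real) \<Rightarrow> real \<Rightarrow> nat" where
  "part_index x y = (LEAST n. 1 \<le> n \<and> y \<le> x n)"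

definition fractal_T ::
  "(nat \<Rightarrow> real) \<Rightarrow> nat \<Rightarrow> (nat \<Rightarrow> real \<Rightarrow> real) \<Rightarrow> (real \<Rightarrow> real) \<Rightarrow> (real \<Rightarrow> real)
    \<Rightarrow> (real \<Rightarrow> real) \<Rightarrow> real \<Rightarrow> real" where
  "fractal_T x N \<alpha> f b g y =
     (if y \<in> {x 0..x N} then
        (let n = part_index x y; t = Linv x N n y in f y + \<alpha> n t * (g t - b t))
      else 0)"

(* f *_T b : the fixed point of T in E = L^p(I) (unique up to a.e. equality) *)
definition fractal_star ::
  "real \<Rightarrow> (nat \<Rightarrow> real) \<Rightarrow> nat \<Rightarrow> (nat \<Rightarrow> real \<Rightarrow> real) \<Rightarrow> (real \<Rightarrow> real) \<Rightarrow> (real \<Rightarrow> real)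
    \<Rightarrow> real \<Rightarrow> real" where
  "fractal_star p x N \<alpha> f b = (SOME h. h \<in> Lp_space p {x 0..x N} \<and>
       (AE y in lebesgue_on {x 0..x N}. h y = fractal_T x N \<alpha> f b h y))"

end

theory Submission
  imports Defs
begin

text \<open>For \<open>y \<in> I\<^sub>n\<close> put \<open>A u y = \<alpha>\<^sub>n (L\<^sub>n\<^sup>-\<^sup>1 y) * u (L\<^sub>n\<^sup>-\<^sup>1 y)\<close>, so that \<open>T g = f + A (g - b)\<close>.
  Each \<open>L\<^sub>n\<^sup>-\<^sup>1\<close> maps \<open>I\<^sub>n\<close> affinely onto \<open>I\<close> with Jacobian \<open>|I| / |I\<^sub>n|\<close>, and the reciprocal
  Jacobians sum to \<open>1\<close>; hence \<open>A\<close> is bounded on \<open>L\<^sup>p\<close> with norm at most \<open>\<Lambda> < 1\<close>.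
  The fixed point \<open>h = 0 *\<^sub>T b\<close> satisfies \<open>h = A (h - b)\<close> and is the Neumann series
  \<open>- (\<Sum>k\<ge>1. A\<^sup>k b)\<close>. So \<open>D = id - A\<close> maps \<open>b\<^sub>m - 0 *\<^sub>T b\<^sub>m\<close> to \<open>b\<^sub>m\<close>, and since
  \<open>(1 - \<Lambda>) \<parallel>u\<parallel> \<le> \<parallel>D u\<parallel> \<le> (1 + \<Lambda>) \<parallel>u\<parallel>\<close>, the unique coefficients of \<open>D f\<close> in the basis
  \<open>(b\<^sub>m)\<close> are exactly the unique coefficients of \<open>f\<close> in \<open>(b\<^sub>m - 0 *\<^sub>T b\<^sub>m)\<close>.\<close>

section \<open>The \<open>L\<^sup>p\<close> seminorm\<close>

definition Lp_nn_integral :: "real \<Rightarrow> real set \<Rightarrow> (real \<Rightarrow> real) \<Rightarrow> ennreal" where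
  "Lp_nn_integral p I u = (\<integral>\<^sup>+y. ennreal (\<bar>u y\<bar> powr p) \<partial>lebesgue_on I)"

lemma Lp_space_iff_nn_integral:
  "u \<in> Lp_space p I \<longleftrightarrow> u \<in> borel_measurable (lebesgue_on I) \<and> Lp_nn_integral p I u < \<infinity>"
  unfolding Lp_space_def Lp_nn_integral_def
  by (auto simp: integrable_iff_bounded intro: measurable_abs_powr)

lemma Lp_space_measurable: "u \<in> Lp_space p I \<Longrightarrow> u \<in> borel_measurable (lebesgue_on I)"
  by (simp add: Lp_space_iff_nn_integral)

lemma Lp_norm_eq_nn_integral:
  "u \<in> borel_measurable (lebesgue_on I) \<Longrightarrow> Lp_norm p I u = enn2real (Lp_nn_integral p I u) powr (1 / p)"
  unfolding Lp_norm_def Lp_nn_integral_def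
  by (subst integral_eq_nn_integral) (auto intro: measurable_abs_powr)

lemma Lp_norm_nonneg: "0 \<le> Lp_norm p I u"
  unfolding Lp_norm_def by simp

lemma Lp_zero: "(\<lambda>_. 0) \<in> Lp_space p I" "Lp_norm p I (\<lambda>_. 0) = 0"
  unfolding Lp_space_def Lp_norm_def by simp_all

lemma Lp_nn_integral_eq_Lp_norm_powr:
  assumes "u \<in> Lp_space p I" "0 < p"
  shows "Lp_nn_integral p I u = ennreal (Lp_norm p I u powr p)"
proof -
  have m: "u \<in> borel_measurable (lebesgue_on I)" and f: "Lp_nn_integral p I u < \<infinity>"
    using assms by (auto simp: Lp_space_iff_nn_integral)
  have "Lp_norm p I u powr p = enn2real (Lp_nn_integral p I u)"
    using assms by (simp add: Lp_norm_eq_nn_integral[OF m] powr_powr)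
  then show ?thesis using f by (simp add: ennreal_enn2real_if less_top[symmetric])
qed

lemma Lp_if_nn_integral_le:
  assumes m: "u \<in> borel_measurable (lebesgue_on I)" and a: "0 \<le> a" and p: "0 < p"
    and le: "Lp_nn_integral p I u \<le> ennreal (a powr p)"
  shows "u \<in> Lp_space p I" "Lp_norm p I u \<le> a"
proof -
  show "u \<in> Lp_space p I"
    using m le by (auto simp: Lp_space_iff_nn_integral top.extremum_strict intro: le_less_trans)
  have "enn2real (Lp_nn_integral p I u) \<le> a powr p" using le by (simp add: enn2real_leI)
  then have "enn2real (Lp_nn_integral p I u) powr (1 / p) \<le> (a powr p) powr (1 / p)"
    using p by (intro powr_mono2) auto
  also have "\<dots> = a" using a p by (simp add: powr_powr)
  finally show "Lp_norm p I u \<le> a" using Lp_norm_eq_nn_integral[OF m] by simp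
qed

lemma Lp_cong_AE:
  assumes u: "u \<in> Lp_space p I" and v: "v \<in> borel_measurable (lebesgue_on I)"
    and ae: "AE y in lebesgue_on I. u y = v y"
  shows "v \<in> Lp_space p I" "Lp_norm p I v = Lp_norm p I u"
proof -
  have eq: "Lp_nn_integral p I v = Lp_nn_integral p I u"
    unfolding Lp_nn_integral_def by (rule nn_integral_cong_AE) (use ae in auto)
  then show "v \<in> Lp_space p I" using u v by (simp add: Lp_space_iff_nn_integral)
  show "Lp_norm p I v = Lp_norm p I u"
    using eq u v by (simp add: Lp_norm_eq_nn_integral Lp_space_measurable)
qed

lemma Lp_abs:
  assumes "u \<in> Lp_space p I"
  shows "(\<lambda>y. \<bar>u y\<bar>) \<in> Lp_space p I" "Lp_norm p I (\<lambda>y. \<bar>u y\<bar>) = Lp_norm p I u"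
  using assms by (auto simp: Lp_space_def Lp_norm_def)

lemma Lp_nn_integral_mult:
  "u \<in> borel_measurable (lebesgue_on I) \<Longrightarrow>
    Lp_nn_integral p I (\<lambda>y. c * u y) = ennreal (\<bar>c\<bar> powr p) * Lp_nn_integral p I u"
  unfolding Lp_nn_integral_def
  by (subst nn_integral_cmult[symmetric])
    (auto simp: abs_mult powr_mult ennreal_mult intro!: nn_integral_cong measurable_abs_powr)

lemma Lp_mult:
  assumes p: "0 < p" and u: "u \<in> Lp_space p I"
  shows "(\<lambda>y. c * u y) \<in> Lp_space p I" "Lp_norm p I (\<lambda>y. c * u y) \<le> \<bar>c\<bar> * Lp_norm p I u"
proof -
  have "Lp_nn_integral p I (\<lambda>y. c * u y) = ennreal ((\<bar>c\<bar> * Lp_norm p I u) powr p)"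
    using Lp_nn_integral_mult[OF Lp_space_measurable[OF u], of p c]
      Lp_nn_integral_eq_Lp_norm_powr[OF u p]
    by (simp add: powr_mult ennreal_mult Lp_norm_nonneg)
  then show "(\<lambda>y. c * u y) \<in> Lp_space p I" "Lp_norm p I (\<lambda>y. c * u y) \<le> \<bar>c\<bar> * Lp_norm p I u"
    using Lp_if_nn_integral_le[of "\<lambda>y. c * u y" I "\<bar>c\<bar> * Lp_norm p I u" p]
      Lp_space_measurable[OF u] p
    by (auto simp: Lp_norm_nonneg)
qed

lemma powr_convex_combination_le:
  fixes s r l p :: real
  assumes p: "1 \<le> p" and s: "0 \<le> s" and r: "0 \<le> r" and l: "0 \<le> l" "l \<le> 1"
  shows "(l * s + (1 - l) * r) powr p \<le> l * s powr p + (1 - l) * r powr p"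
proof -
  consider "0 < s" "0 < r" | "s = 0" | "r = 0" using s r by linarith
  then show ?thesis
  proof cases
    case 1
    show ?thesis using convex_onD[OF powr_convex[OF p], of "1 - l" s r] 1 l by auto
  next
    case 2
    have "(1 - l) powr p \<le> (1 - l) powr 1" using l p by (intro powr_mono') auto
    then have "(1 - l) powr p * r powr p \<le> (1 - l) * r powr p"
      using l by (intro mult_right_mono) auto
    then show ?thesis using 2 l r by (simp add: powr_mult)
  next
    case 3
    have "l powr p \<le> l powr 1" using l p by (intro powr_mono') auto
    then have "l powr p * s powr p \<le> l * s powr p"
      using l by (intro mult_right_mono) auto
    then show ?thesis using 3 l s by (simp add: powr_mult)
  qed
qed

lemma abs_add_powr_le_weighted:
  fixes u v l p :: real
  assumes p: "1 \<le> p" and l: "0 < l" "l < 1"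
  shows "\<bar>u + v\<bar> powr p \<le> l powr (1 - p) * \<bar>u\<bar> powr p + (1 - l) powr (1 - p) * \<bar>v\<bar> powr p"
proof -
  define s where "s = \<bar>u\<bar> / l"
  define r where "r = \<bar>v\<bar> / (1 - l)"
  have sr: "0 \<le> s" "0 \<le> r" using l by (auto simp: s_def r_def)
  have "\<bar>u + v\<bar> \<le> l * s + (1 - l) * r" using l by (simp add: s_def r_def)
  then have "\<bar>u + v\<bar> powr p \<le> (l * s + (1 - l) * r) powr p"
    using p by (intro powr_mono2) auto
  also have "\<dots> \<le> l * s powr p + (1 - l) * r powr p"
    using powr_convex_combination_le[OF p sr] l by auto
  also have "l * s powr p = l powr (1 - p) * \<bar>u\<bar> powr p"
    using l by (simp add: s_def powr_divide powr_diff)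
  also have "(1 - l) * r powr p = (1 - l) powr (1 - p) * \<bar>v\<bar> powr p"
    using l by (simp add: r_def powr_divide powr_diff)
  finally show ?thesis .
qed

lemma powr_weighted_sum_eq:
  fixes a b p :: real
  assumes a: "0 < a" and b: "0 < b"
  shows "(a / (a + b)) powr (1 - p) * a powr p + (b / (a + b)) powr (1 - p) * b powr p = (a + b) powr p"
proof -
  have "(c / (a + b)) powr (1 - p) * c powr p = c * (a + b) powr (p - 1)" if c: "0 < c" for c
  proof -
    have "(c / (a + b)) powr (1 - p) * c powr p = c powr (1 - p) * c powr p / (a + b) powr (1 - p)"
      by (simp add: powr_divide)
    also have "c powr (1 - p) * c powr p = c" using c by (simp add: powr_add[symmetric])
    also have "c / (a + b) powr (1 - p) = c * (a + b) powr (p - 1)"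
      using powr_minus[of "a + b" "1 - p"] by (simp add: divide_inverse)
    finally show ?thesis .
  qed
  moreover have "(a + b) * (a + b) powr (p - 1) = (a + b) powr p"
    using a b by (simp add: powr_mult_base)
  ultimately show ?thesis using a b by (simp add: algebra_simps)
qed

lemma Lp_nn_integral_add_null:
  assumes u: "u \<in> borel_measurable (lebesgue_on I)" and null: "Lp_nn_integral p I u = 0"
  shows "Lp_nn_integral p I (\<lambda>y. u y + v y) = Lp_nn_integral p I v"
proof -
  have "AE y in lebesgue_on I. ennreal (\<bar>u y\<bar> powr p) = 0"
    using null u unfolding Lp_nn_integral_def
    by (subst (asm) nn_integral_0_iff_AE) (auto intro: measurable_abs_powr)
  then have "AE y in lebesgue_on I. u y = 0" by eventually_elim simp
  then show ?thesis unfolding Lp_nn_integral_def by (intro nn_integral_cong_AE) auto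
qed

text \<open>Minkowski's inequality, phrased for the \<open>p\<close>-th powers of the norms: writing
  \<open>u + v = l (u / l) + (1 - l) (v / (1 - l))\<close> with \<open>l = a / (a + b)\<close>, convexity of
  \<open>t powr p\<close> gives the bound pointwise.\<close>
lemma Lp_nn_integral_add_le:
  assumes p: "1 \<le> p"
    and u: "u \<in> borel_measurable (lebesgue_on I)" and v: "v \<in> borel_measurable (lebesgue_on I)"
    and a: "0 \<le> a" and b: "0 \<le> b"
    and ua: "Lp_nn_integral p I u \<le> ennreal (a powr p)"
    and vb: "Lp_nn_integral p I v \<le> ennreal (b powr p)"
  shows "Lp_nn_integral p I (\<lambda>y. u y + v y) \<le> ennreal ((a + b) powr p)"
proof (cases "a = 0 \<or> b = 0")
  case True
  then show ?thesis
  proof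
    assume "a = 0"
    then show ?thesis using Lp_nn_integral_add_null[OF u, of p v] ua vb by simp
  next
    assume "b = 0"
    then show ?thesis
      using Lp_nn_integral_add_null[OF v, of p u] ua vb by (simp add: add.commute)
  qed
next
  case False
  then have a0: "0 < a" and b0: "0 < b" using a b by auto
  define l where "l = a / (a + b)"
  have l: "0 < l" "l < 1" using a0 b0 by (auto simp: l_def)
  have 1: "1 - l = b / (a + b)" using a0 b0 by (simp add: l_def field_simps)
  have "Lp_nn_integral p I (\<lambda>y. u y + v y) \<le> (\<integral>\<^sup>+y. ennreal (l powr (1 - p)) * ennreal (\<bar>u y\<bar> powr p)
      + ennreal ((1 - l) powr (1 - p)) * ennreal (\<bar>v y\<bar> powr p) \<partial>lebesgue_on I)"
    unfolding Lp_nn_integral_def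
    by (intro nn_integral_mono)
      (simp add: ennreal_mult[symmetric] ennreal_plus[symmetric] abs_add_powr_le_weighted[OF p l]
        del: ennreal_plus)
  also have "\<dots> = ennreal (l powr (1 - p)) * Lp_nn_integral p I u
      + ennreal ((1 - l) powr (1 - p)) * Lp_nn_integral p I v"
    unfolding Lp_nn_integral_def using u v by (simp add: nn_integral_add nn_integral_cmult)
  also have "\<dots> \<le> ennreal (l powr (1 - p)) * ennreal (a powr p)
      + ennreal ((1 - l) powr (1 - p)) * ennreal (b powr p)"
    using ua vb by (intro add_mono mult_left_mono) auto
  also have "\<dots> = ennreal ((a + b) powr p)"
    using powr_weighted_sum_eq[OF a0 b0, of p] 1 unfolding l_def
    by (simp add: ennreal_mult[symmetric] ennreal_plus[symmetric] del: ennreal_plus)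
  finally show ?thesis .
qed

lemma Lp_add:
  assumes p: "1 \<le> p" and u: "u \<in> Lp_space p I" and v: "v \<in> Lp_space p I"
  shows "(\<lambda>y. u y + v y) \<in> Lp_space p I"
    "Lp_norm p I (\<lambda>y. u y + v y) \<le> Lp_norm p I u + Lp_norm p I v"
proof -
  have um: "u \<in> borel_measurable (lebesgue_on I)" and vm: "v \<in> borel_measurable (lebesgue_on I)"
    using u v by (auto simp: Lp_space_measurable)
  have "Lp_nn_integral p I (\<lambda>y. u y + v y) \<le> ennreal ((Lp_norm p I u + Lp_norm p I v) powr p)"
    using Lp_nn_integral_add_le[OF p um vm Lp_norm_nonneg Lp_norm_nonneg]
      Lp_nn_integral_eq_Lp_norm_powr[OF u] Lp_nn_integral_eq_Lp_norm_powr[OF v] p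
    by simp
  then show "(\<lambda>y. u y + v y) \<in> Lp_space p I"
    "Lp_norm p I (\<lambda>y. u y + v y) \<le> Lp_norm p I u + Lp_norm p I v"
    using Lp_if_nn_integral_le[of "\<lambda>y. u y + v y" I "Lp_norm p I u + Lp_norm p I v" p] um vm p
    by (auto simp: Lp_norm_nonneg add_nonneg_nonneg)
qed

lemma Lp_diff:
  assumes p: "1 \<le> p" and u: "u \<in> Lp_space p I" and v: "v \<in> Lp_space p I"
  shows "(\<lambda>y. u y - v y) \<in> Lp_space p I"
    "Lp_norm p I (\<lambda>y. u y - v y) \<le> Lp_norm p I u + Lp_norm p I v"
  using Lp_add[OF p u Lp_mult(1)[OF _ v, of "-1"]] Lp_mult(2)[OF _ v, of "-1"] p by auto

lemma Lp_sum:
  fixes n :: nat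
  assumes p: "1 \<le> p" and g: "\<And>m. g m \<in> Lp_space p I"
  shows "(\<lambda>y. \<Sum>m<n. c m * g m y) \<in> Lp_space p I"
proof (induction n)
  case 0
  then show ?case using Lp_zero by simp
next
  case (Suc n)
  have "(\<lambda>y. (\<Sum>m<n. c m * g m y) + c n * g n y) \<in> Lp_space p I"
    using Lp_add(1)[OF p Suc.IH Lp_mult(1)[OF _ g]] p by simp
  then show ?case by simp
qed

lemma Lp_diff_sum:
  fixes n :: nat
  assumes p: "1 \<le> p" and f: "f \<in> Lp_space p I" and g: "\<And>m. g m \<in> Lp_space p I"
  shows "(\<lambda>y. f y - (\<Sum>m<n. c m * g m y)) \<in> Lp_space p I"
  using Lp_diff(1)[OF p f Lp_sum[where g=g]] p g by blast

section \<open>Schauder sequences via isomorphisms onto the image\<close>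

lemma pointwise_linear_diff_sum:
  fixes T :: "('a \<Rightarrow> real) \<Rightarrow> 'a \<Rightarrow> real"
  assumes add: "\<And>u v y. T (\<lambda>y. u y + v y) y = T u y + T v y"
    and mult: "\<And>a u y. T (\<lambda>y. a * u y) y = a * T u y"
  shows "T (\<lambda>y. f y - (\<Sum>m\<in>S. c m * g m y)) y = T f y - (\<Sum>m\<in>S. c m * T (g m) y)"
proof (induction S arbitrary: f rule: infinite_finite_induct)
  case (insert i S)
  have "T (\<lambda>y. f y - (\<Sum>m\<in>insert i S. c m * g m y)) y
      = T (\<lambda>y. (f y - (\<Sum>m\<in>S. c m * g m y)) + (- c i) * g i y) y"
    using insert.hyps by (simp add: algebra_simps)
  also have "\<dots> = T (\<lambda>y. f y - (\<Sum>m\<in>S. c m * g m y)) y + T (\<lambda>y. (- c i) * g i y) y"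
    by (rule add)
  also have "\<dots> = T f y - (\<Sum>m\<in>S. c m * T (g m) y) - c i * T (g i) y"
    using insert.IH mult[of "- c i" "g i" y] by simp
  finally show ?case using insert.hyps by (simp add: algebra_simps)
qed simp_all

lemma mem_closed_span:
  assumes "\<And>m. b m \<in> Lp_space p I"
  shows "b m \<in> closed_span p I b"
proof -
  have "(\<lambda>y. b m y - (\<Sum>j<Suc m. (if j = m then 1 else 0) * b j y)) = (\<lambda>_. 0)"
    by (simp add: if_distrib[of "\<lambda>z. z * b _ _"] cong: if_cong)
  then show ?thesis
    unfolding closed_span_def using assms Lp_zero
    by (auto intro!: exI[of _ "Suc m"] exI[of _ "\<lambda>j. if j = m then 1 else 0"])
qed

lemma ex1_tendsto_0_if_comparable:
  fixes F G :: "'a \<Rightarrow> nat \<Rightarrow> real"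
  assumes F_nonneg: "\<And>a n. 0 \<le> F a n" and c: "0 < c"
    and lower: "\<And>a n. c * F a n \<le> G a n" and upper: "\<And>a n. G a n \<le> C * F a n"
    and G: "\<exists>!a. G a \<longlonglongrightarrow> 0"
  shows "\<exists>!a. F a \<longlonglongrightarrow> 0"
proof -
  obtain a where a: "G a \<longlonglongrightarrow> 0" and a_unique: "\<And>d. G d \<longlonglongrightarrow> 0 \<Longrightarrow> d = a"
    using G by blast
  show ?thesis
  proof (rule ex1I[of _ a])
    have "norm (F a n) \<le> G a n / c" for n
      using F_nonneg[of a n] lower[of a n] c by (simp add: field_simps)
    then show "F a \<longlonglongrightarrow> 0"
      by (intro Lim_null_comparison[OF always_eventually tendsto_divide_zero[OF a, of c]]) simp
  next
    fix d assume d: "F d \<longlonglongrightarrow> 0"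
    have "norm (G d n) \<le> C * F d n" for n
      using F_nonneg[of d n] lower[of d n] upper[of d n] c
      by (simp add: mult_nonneg_nonneg order_trans[OF _ lower])
    then show "d = a"
      by (intro a_unique Lim_null_comparison[OF always_eventually tendsto_mult_right_zero[OF d, of C]]) simp
  qed
qed

lemma schauder_sequence_transfer:
  fixes T :: "(real \<Rightarrow> real) \<Rightarrow> real \<Rightarrow> real"
  assumes p: "1 \<le> p" and basis: "schauder_basis_of p I (Lp_space p I) b"
    and b': "\<And>m. b' m \<in> Lp_space p I"
    and add: "\<And>u v y. T (\<lambda>y. u y + v y) y = T u y + T v y"
    and mult: "\<And>a u y. T (\<lambda>y. a * u y) y = a * T u y"
    and T_Lp: "\<And>u. u \<in> Lp_space p I \<Longrightarrow> T u \<in> Lp_space p I"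
    and c: "0 < c" and lower: "\<And>u. u \<in> Lp_space p I \<Longrightarrow> c * Lp_norm p I u \<le> Lp_norm p I (T u)"
    and upper: "\<And>u. u \<in> Lp_space p I \<Longrightarrow> Lp_norm p I (T u) \<le> C * Lp_norm p I u"
    and T_b': "\<And>m. AE y in lebesgue_on I. T (b' m) y = b m y"
  shows "schauder_sequence p I b'"
  unfolding schauder_sequence_def schauder_basis_of_def
proof (intro conjI allI ballI mem_closed_span[OF b'])
  fix f assume "f \<in> closed_span p I b'"
  then have f: "f \<in> Lp_space p I" unfolding closed_span_def by auto
  have b: "b m \<in> Lp_space p I" for m using basis unfolding schauder_basis_of_def by auto
  have rest: "(\<lambda>y. f y - (\<Sum>m<n. a m * b' m y)) \<in> Lp_space p I" for a n
    using Lp_diff_sum[OF p f, where g=b'] b' by blast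
  have T_rest: "Lp_norm p I (T (\<lambda>y. f y - (\<Sum>m<n. a m * b' m y)))
      = Lp_norm p I (\<lambda>y. T f y - (\<Sum>m<n. a m * b m y))" for a n
  proof (rule Lp_cong_AE(2)[symmetric])
    show "T (\<lambda>y. f y - (\<Sum>m<n. a m * b' m y)) \<in> Lp_space p I"
      by (rule T_Lp[OF rest])
    show "(\<lambda>y. T f y - (\<Sum>m<n. a m * b m y)) \<in> borel_measurable (lebesgue_on I)"
      using Lp_diff_sum[OF p T_Lp[OF f], where g=b] b by (blast intro: Lp_space_measurable)
    have "AE y in lebesgue_on I. \<forall>m. T (b' m) y = b m y"
      using T_b' by (simp add: AE_all_countable)
    moreover have "T (\<lambda>y. f y - (\<Sum>m<n. a m * b' m y)) y = T f y - (\<Sum>m<n. a m * T (b' m) y)" for y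
      using add mult by (rule pointwise_linear_diff_sum)
    ultimately show "AE y in lebesgue_on I.
        T (\<lambda>y. f y - (\<Sum>m<n. a m * b' m y)) y = T f y - (\<Sum>m<n. a m * b m y)"
      by (auto elim: eventually_mono)
  qed
  show "\<exists>!a. (\<lambda>n. Lp_norm p I (\<lambda>y. f y - (\<Sum>m<n. a m * b' m y))) \<longlonglongrightarrow> 0"
  proof (rule ex1_tendsto_0_if_comparable[OF Lp_norm_nonneg c])
    show "c * Lp_norm p I (\<lambda>y. f y - (\<Sum>m<n. a m * b' m y))
        \<le> Lp_norm p I (\<lambda>y. T f y - (\<Sum>m<n. a m * b m y))" for a n
      using lower[OF rest] T_rest by simp
    show "Lp_norm p I (\<lambda>y. T f y - (\<Sum>m<n. a m * b m y))
        \<le> C * Lp_norm p I (\<lambda>y. f y - (\<Sum>m<n. a m * b' m y))" for a n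
      using upper[OF rest] T_rest by simp
    show "\<exists>!a. (\<lambda>n. Lp_norm p I (\<lambda>y. T f y - (\<Sum>m<n. a m * b m y))) \<longlonglongrightarrow> 0"
      using basis T_Lp[OF f] unfolding schauder_basis_of_def by blast
  qed
qed

section \<open>Affine pieces of the partition\<close>

locale ordered_partition =
  fixes x :: "nat \<Rightarrow> real" and N :: nat
  assumes N_pos: "1 \<le> N" and x_less_Suc: "\<forall>k<N. x k < x (Suc k)"
begin

abbreviation "I \<equiv> {x 0..x N}"
abbreviation "M \<equiv> lebesgue_on I"
abbreviation "pidx \<equiv> part_index x"
abbreviation "Li \<equiv> Linv x N"

lemma x_less: "i < j \<Longrightarrow> j \<le> N \<Longrightarrow> x i < x j"
proof (induction j)
  case (Suc j)
  have "x j < x (Suc j)" using x_less_Suc Suc.prems by auto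
  then show ?case using Suc by (cases "i = j") auto
qed simp

lemma x_le: "i \<le> j \<Longrightarrow> j \<le> N \<Longrightarrow> x i \<le> x j"
  using x_less[of i j] by (cases "i = j") auto

lemma x0_less_xN: "x 0 < x N"
  using x_less[of 0 N] N_pos by simp

lemma part_index:
  assumes y: "y \<in> I"
  shows "pidx y \<in> {1..N}" "y \<le> x (pidx y)" "pidx y = 1 \<or> x (pidx y - 1) < y"
proof -
  have ex: "1 \<le> N \<and> y \<le> x N" using N_pos y by auto
  have least: "1 \<le> pidx y \<and> y \<le> x (pidx y)"
    unfolding part_index_def by (rule LeastI[where P="\<lambda>n. 1 \<le> n \<and> y \<le> x n", OF ex])
  have "pidx y \<le> N"
    unfolding part_index_def by (rule Least_le[where P="\<lambda>n. 1 \<le> n \<and> y \<le> x n", OF ex])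
  then show "pidx y \<in> {1..N}" using least by auto
  show "y \<le> x (pidx y)" using least by auto
  show "pidx y = 1 \<or> x (pidx y - 1) < y"
  proof (cases "pidx y = 1")
    case False
    then have "pidx y - 1 < pidx y" "1 \<le> pidx y - 1" using least by auto
    then have "\<not> (1 \<le> pidx y - 1 \<and> y \<le> x (pidx y - 1))"
      unfolding part_index_def using not_less_Least by blast
    then show ?thesis using \<open>1 \<le> pidx y - 1\<close> by auto
  qed simp
qed

lemma part_index_eqI:
  assumes y: "y \<in> I" and n: "n \<in> {1..N}" and "y \<le> x n" and "n = 1 \<or> x (n - 1) < y"
  shows "pidx y = n"
  unfolding part_index_def
proof (rule Least_equality)
  show "1 \<le> n \<and> y \<le> x n" using assms by auto
  fix m assume m: "1 \<le> m \<and> y \<le> x m"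
  show "n \<le> m"
  proof (rule ccontr)
    assume "\<not> n \<le> m"
    then have "m \<le> n - 1" "n \<noteq> 1" using m by auto
    then have "x m \<le> x (n - 1)" using x_le n by auto
    then show False using m assms \<open>n \<noteq> 1\<close> by auto
  qed
qed

lemma part_index_preimage:
  assumes n: "n \<in> {1..N}"
  shows "{y \<in> I. pidx y = n} = I \<inter> {..x n} \<inter> (if n = 1 then UNIV else {x (n - 1)<..})"
proof (intro set_eqI iffI)
  fix y assume "y \<in> {y \<in> I. pidx y = n}"
  then show "y \<in> I \<inter> {..x n} \<inter> (if n = 1 then UNIV else {x (n - 1)<..})"
    using part_index[of y] by auto
next
  fix y assume "y \<in> I \<inter> {..x n} \<inter> (if n = 1 then UNIV else {x (n - 1)<..})"
  then have "y \<in> I" "y \<le> x n" "n = 1 \<or> x (n - 1) < y" by (auto split: if_splits)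
  then show "y \<in> {y \<in> I. pidx y = n}" using part_index_eqI[OF _ n] by auto
qed

lemma part_index_preimage_sets: "{y \<in> I. pidx y = n} \<in> sets M"
proof (cases "n \<in> {1..N}")
  case True
  then have "{y \<in> I. pidx y = n} \<in> sets lebesgue" unfolding part_index_preimage[OF True] by simp
  then show ?thesis by (subst sets_restrict_space_iff) auto
next
  case False
  then have empty: "{y \<in> I. pidx y = n} = {}" using part_index by auto
  show ?thesis unfolding empty by simp
qed

definition slope :: "nat \<Rightarrow> real" where
  "slope n = (x N - x 0) / (x n - x (n - 1))"

lemma slope_pos: "n \<in> {1..N} \<Longrightarrow> 0 < slope n"
  using x_less[of "n - 1" n] x0_less_xN unfolding slope_def by auto

lemma Linv_eq: "Li n = (\<lambda>y. (x 0 - x (n - 1) * slope n) + slope n * y)"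
proof
  fix y
  have "Li n y = x 0 + (y - x (n - 1)) * slope n" unfolding Linv_def slope_def by simp
  then show "Li n y = (x 0 - x (n - 1) * slope n) + slope n * y" by (simp add: algebra_simps)
qed

lemma Linv_mem:
  assumes n: "n \<in> {1..N}" and "x (n - 1) \<le> y" "y \<le> x n"
  shows "Li n y \<in> I"
proof -
  define s where "s = (y - x (n - 1)) / (x n - x (n - 1))"
  have d: "x (n - 1) < x n" using x_less[of "n - 1" n] n by auto
  have s: "0 \<le> s" "s \<le> 1" using assms d by (auto simp: s_def field_simps)
  have "Li n y = x 0 + s * (x N - x 0)" using d by (simp add: Linv_def s_def field_simps)
  moreover have "0 \<le> s * (x N - x 0)" "s * (x N - x 0) \<le> x N - x 0"
    using s x0_less_xN by (auto intro: mult_left_le_one_le)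
  ultimately show ?thesis by auto
qed

lemma Linv_part_index_mem: "y \<in> I \<Longrightarrow> Li (pidx y) y \<in> I"
  using part_index[of y] by (intro Linv_mem) auto

lemma Linv_measurable: "n \<in> {1..N} \<Longrightarrow> Li n \<in> lebesgue \<rightarrow>\<^sub>M lebesgue"
  using lebesgue_affine_measurable[where c="\<lambda>_. slope n" and t="x 0 - x (n - 1) * slope n"]
    slope_pos[of n]
  by (simp add: Linv_eq)

lemma measurable_compose_Linv:
  assumes F: "\<And>n. n \<in> {1..N} \<Longrightarrow> F n \<in> M \<rightarrow>\<^sub>M K"
  shows "(\<lambda>y. F (pidx y) (Li (pidx y) y)) \<in> M \<rightarrow>\<^sub>M K"
proof (rule measurable_piecewise_restrict2[where A="\<lambda>n. {y \<in> I. pidx y = n}"])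
  show "{y \<in> I. pidx y = n} \<in> sets M" for n by (rule part_index_preimage_sets)
  show "space M = (\<Union>n. {y \<in> I. pidx y = n})" by auto
  fix n
  show "\<exists>h\<in>M \<rightarrow>\<^sub>M K. \<forall>y\<in>{y \<in> I. pidx y = n}. F (pidx y) (Li (pidx y) y) = h y"
  proof (cases "n \<in> {1..N}")
    case n: True
    have Li: "Li n \<in> M \<rightarrow>\<^sub>M lebesgue"
      using Linv_measurable[OF n] measurable_restrict_space1 by blast
    define clamp where "clamp y = (if Li n y \<in> I then Li n y else x 0)" for y
    have "clamp \<in> M \<rightarrow>\<^sub>M lebesgue"
      unfolding clamp_def
    proof (rule measurable_If[OF Li])
      show "{y \<in> space M. Li n y \<in> I} \<in> sets M"
        using measurable_sets[OF Li, of I] by (simp add: vimage_def Int_def conj_commute)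
    qed simp
    then have "clamp \<in> M \<rightarrow>\<^sub>M M"
      by (rule measurable_restrict_space2[rotated]) (auto simp: clamp_def x0_less_xN less_imp_le)
    then have "(\<lambda>y. F n (clamp y)) \<in> M \<rightarrow>\<^sub>M K"
      using F[OF n] by (rule measurable_compose)
    moreover have "\<forall>y\<in>{y \<in> I. pidx y = n}. F (pidx y) (Li (pidx y) y) = F n (clamp y)"
      unfolding clamp_def using Linv_part_index_mem by auto
    ultimately show ?thesis by (intro bexI[where x="\<lambda>y. F n (clamp y)"]) auto
  next
    case False
    then have "{y \<in> I. pidx y = n} = {}" using part_index by auto
    then show ?thesis using F[of 1] N_pos by auto
  qed
qed

lemma sum_inverse_slope: "(\<Sum>n\<in>{1..N}. 1 / slope n) = 1"
proof -
  have "(\<Sum>n\<in>{1..K}. (x n - x (n - 1))) = x K - x 0" if "1 \<le> K" for K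
    using that by (induction K rule: dec_induct) simp_all
  then show ?thesis
    using N_pos x0_less_xN by (simp add: slope_def sum_divide_distrib[symmetric])
qed

text \<open>Change of variables: \<open>Li n\<close> stretches the \<open>n\<close>-th piece affinely onto \<open>I\<close>, with
  Jacobian \<open>slope n\<close>.\<close>
lemma nn_integral_compose_Linv_le:
  fixes F :: "nat \<Rightarrow> real \<Rightarrow> ennreal"
  assumes F: "\<And>n. n \<in> {1..N} \<Longrightarrow> F n \<in> borel_measurable M"
  shows "(\<integral>\<^sup>+y. F (pidx y) (Li (pidx y) y) \<partial>M)
     \<le> (\<Sum>n\<in>{1..N}. ennreal (1 / slope n) * (\<integral>\<^sup>+t. F n t \<partial>M))"
proof -
  define G where "G n t = (if t \<in> I then F n t else 0)" for n t
  have G: "G n \<in> borel_measurable lebesgue" if n: "n \<in> {1..N}" for n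
    using F[OF n] unfolding G_def by (subst (asm) measurable_restrict_space_iff) auto
  have "(\<integral>\<^sup>+y. F (pidx y) (Li (pidx y) y) \<partial>M) \<le> (\<integral>\<^sup>+y. (\<Sum>n\<in>{1..N}. G n (Li n y)) \<partial>M)"
  proof (rule nn_integral_mono)
    fix y assume "y \<in> space M"
    then have y: "y \<in> I" by simp
    have "F (pidx y) (Li (pidx y) y) = G (pidx y) (Li (pidx y) y)"
      using Linv_part_index_mem[OF y] by (simp add: G_def)
    also have "\<dots> \<le> (\<Sum>n\<in>{1..N}. G n (Li n y))"
      by (rule member_le_sum) (use part_index[OF y] in auto)
    finally show "F (pidx y) (Li (pidx y) y) \<le> (\<Sum>n\<in>{1..N}. G n (Li n y))" .
  qed
  also have "\<dots> = (\<integral>\<^sup>+y. (\<Sum>n\<in>{1..N}. G n (Li n y)) * indicator I y \<partial>lebesgue)"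
    by (rule nn_integral_restrict_space) simp
  also have "\<dots> \<le> (\<integral>\<^sup>+y. (\<Sum>n\<in>{1..N}. G n (Li n y)) \<partial>lebesgue)"
    by (rule nn_integral_mono) (simp add: indicator_def)
  also have "\<dots> = (\<Sum>n\<in>{1..N}. (\<integral>\<^sup>+y. G n (Li n y) \<partial>lebesgue))"
    by (rule nn_integral_sum) (rule measurable_compose[OF Linv_measurable G])
  also have "\<dots> = (\<Sum>n\<in>{1..N}. ennreal (1 / slope n) * (\<integral>\<^sup>+t. F n t \<partial>M))"
  proof (rule sum.cong)
    fix n assume n: "n \<in> {1..N}"
    have "(\<integral>\<^sup>+t. G n t \<partial>lebesgue) = ennreal (slope n) * (\<integral>\<^sup>+y. G n (Li n y) \<partial>lebesgue)"
      using nn_integral_real_affine_lebesgue[OF G[OF n], of "slope n" "x 0 - x (n - 1) * slope n"]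
        slope_pos[OF n]
      by (simp add: Linv_eq)
    then have "(\<integral>\<^sup>+y. G n (Li n y) \<partial>lebesgue) = ennreal (1 / slope n) * (\<integral>\<^sup>+t. G n t \<partial>lebesgue)"
      using slope_pos[OF n] by (simp add: ennreal_mult[symmetric] mult.assoc[symmetric])
    also have "(\<integral>\<^sup>+t. G n t \<partial>lebesgue) = (\<integral>\<^sup>+t. F n t \<partial>M)"
      by (subst nn_integral_restrict_space) (auto simp: G_def indicator_def intro!: nn_integral_cong)
    finally show "(\<integral>\<^sup>+y. G n (Li n y) \<partial>lebesgue) = ennreal (1 / slope n) * (\<integral>\<^sup>+t. F n t \<partial>M)" .
  qed simp
  finally show ?thesis .
qed

lemma nn_integral_compose_Linv_le_bound:
  fixes F :: "nat \<Rightarrow> real \<Rightarrow> ennreal"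
  assumes F: "\<And>n. n \<in> {1..N} \<Longrightarrow> F n \<in> borel_measurable M"
    and B: "\<And>n. n \<in> {1..N} \<Longrightarrow> (\<integral>\<^sup>+t. F n t \<partial>M) \<le> B"
  shows "(\<integral>\<^sup>+y. F (pidx y) (Li (pidx y) y) \<partial>M) \<le> B"
proof -
  have "(\<integral>\<^sup>+y. F (pidx y) (Li (pidx y) y) \<partial>M)
      \<le> (\<Sum>n\<in>{1..N}. ennreal (1 / slope n) * (\<integral>\<^sup>+t. F n t \<partial>M))"
    by (rule nn_integral_compose_Linv_le[OF F])
  also have "\<dots> \<le> (\<Sum>n\<in>{1..N}. ennreal (1 / slope n) * B)"
    by (intro sum_mono mult_left_mono B) auto
  also have "\<dots> = ennreal (\<Sum>n\<in>{1..N}. 1 / slope n) * B"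
    using slope_pos by (subst sum_distrib_right[symmetric], subst sum_ennreal) (auto simp: less_imp_le)
  also have "\<dots> = B" by (simp only: sum_inverse_slope) simp
  finally show ?thesis .
qed

lemma AE_compose_Linv:
  assumes "AE t in M. Q t"
  shows "AE y in M. Q (Li (pidx y) y)"
proof -
  from assms obtain Z where Z: "{t \<in> space M. \<not> Q t} \<subseteq> Z" and Z_null: "emeasure M Z = 0"
    and Z_sets: "Z \<in> sets M"
    by (rule AE_E)
  have ind: "(indicator Z :: real \<Rightarrow> ennreal) \<in> borel_measurable M"
    by (rule borel_measurable_indicator[OF Z_sets])
  have "(\<integral>\<^sup>+y. indicator Z (Li (pidx y) y) \<partial>M) \<le> 0"
    using nn_integral_compose_Linv_le_bound[of "\<lambda>_. indicator Z" 0] ind Z_null Z_sets by simp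
  moreover have "(\<lambda>y. indicator Z (Li (pidx y) y) :: ennreal) \<in> borel_measurable M"
    using measurable_compose_Linv[of "\<lambda>_. indicator Z"] ind by simp
  ultimately have "AE y in M. indicator Z (Li (pidx y) y) = (0::ennreal)"
    by (simp add: nn_integral_0_iff_AE)
  then show ?thesis
  proof (rule AE_mp[OF _ AE_I2], intro impI)
    fix y assume "y \<in> space M" and "indicator Z (Li (pidx y) y) = (0::ennreal)"
    then show "Q (Li (pidx y) y)" using Z Linv_part_index_mem[of y] by (auto simp: indicator_def)
  qed
qed

end

section \<open>The operator \<open>A\<close> and its Neumann series\<close>

locale fractal_operator = ordered_partition x N
  for x :: "nat \<Rightarrow> real" and N :: nat +
  fixes \<alpha> :: "nat \<Rightarrow> real \<Rightarrow> real" and p \<Lambda> :: real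
  assumes \<alpha>_measurable: "\<forall>n\<in>{1..N}. \<alpha> n \<in> borel_measurable (lebesgue_on {x 0..x N})"
    and \<alpha>_bound: "AE t in lebesgue_on {x 0..x N}. \<forall>n\<in>{1..N}. \<bar>\<alpha> n t\<bar> \<le> \<Lambda>"
    and \<Lambda>_nonneg: "0 \<le> \<Lambda>" and \<Lambda>_less_1: "\<Lambda> < 1" and p_ge_1: "1 \<le> p"
begin

definition Aop :: "(real \<Rightarrow> real) \<Rightarrow> real \<Rightarrow> real" where
  "Aop u y = (if y \<in> I then \<alpha> (pidx y) (Li (pidx y) y) * u (Li (pidx y) y) else 0)"

lemma Aop_add: "Aop (\<lambda>t. u t + v t) y = Aop u y + Aop v y"
  by (simp add: Aop_def algebra_simps)

lemma Aop_mult: "Aop (\<lambda>t. a * u t) y = a * Aop u y"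
  by (simp add: Aop_def algebra_simps)

lemma Aop_diff: "Aop (\<lambda>t. u t - v t) y = Aop u y - Aop v y"
  by (simp add: Aop_def algebra_simps)

lemma Aop_measurable:
  assumes u: "u \<in> borel_measurable M"
  shows "Aop u \<in> borel_measurable M"
proof -
  have "(\<lambda>y. (\<lambda>n t. \<alpha> n t * u t) (pidx y) (Li (pidx y) y)) \<in> borel_measurable M"
    by (rule measurable_compose_Linv) (use \<alpha>_measurable u in \<open>auto intro!: borel_measurable_times\<close>)
  then show ?thesis
    by (rule measurable_cong[THEN iffD1, rotated]) (simp add: Aop_def)
qed

lemma Lp_nn_integral_Aop_le:
  assumes u: "u \<in> borel_measurable M"
  shows "Lp_nn_integral p I (Aop u) \<le> ennreal (\<Lambda> powr p) * Lp_nn_integral p I u"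
proof -
  define F where "F n t = ennreal (\<bar>\<alpha> n t * u t\<bar> powr p)" for n t
  have "Lp_nn_integral p I (Aop u) = (\<integral>\<^sup>+y. F (pidx y) (Li (pidx y) y) \<partial>M)"
    unfolding Lp_nn_integral_def F_def by (rule nn_integral_cong) (simp add: Aop_def)
  also have "\<dots> \<le> ennreal (\<Lambda> powr p) * Lp_nn_integral p I u"
  proof (rule nn_integral_compose_Linv_le_bound)
    fix n assume n: "n \<in> {1..N}"
    show "F n \<in> borel_measurable M" unfolding F_def using \<alpha>_measurable n u
      by (intro measurable_compose[OF measurable_abs_powr measurable_ennreal] borel_measurable_times) auto
    have "AE t in M. F n t \<le> ennreal (\<Lambda> powr p) * ennreal (\<bar>u t\<bar> powr p)"
      using \<alpha>_bound
    proof eventually_elim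
      case (elim t)
      then have "\<bar>\<alpha> n t\<bar> powr p \<le> \<Lambda> powr p" using n p_ge_1 by (intro powr_mono2) auto
      then have "\<bar>\<alpha> n t * u t\<bar> powr p \<le> \<Lambda> powr p * \<bar>u t\<bar> powr p"
        by (simp add: abs_mult powr_mult mult_right_mono)
      then show ?case by (simp add: F_def ennreal_mult[symmetric])
    qed
    then have "(\<integral>\<^sup>+t. F n t \<partial>M) \<le> (\<integral>\<^sup>+t. ennreal (\<Lambda> powr p) * ennreal (\<bar>u t\<bar> powr p) \<partial>M)"
      by (rule nn_integral_mono_AE)
    also have "\<dots> = ennreal (\<Lambda> powr p) * Lp_nn_integral p I u"
      unfolding Lp_nn_integral_def
      by (rule nn_integral_cmult) (use u in \<open>auto intro: measurable_abs_powr\<close>)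
    finally show "(\<integral>\<^sup>+t. F n t \<partial>M) \<le> ennreal (\<Lambda> powr p) * Lp_nn_integral p I u" .
  qed
  finally show ?thesis .
qed

lemma Aop_Lp:
  assumes u: "u \<in> Lp_space p I"
  shows "Aop u \<in> Lp_space p I" "Lp_norm p I (Aop u) \<le> \<Lambda> * Lp_norm p I u"
proof -
  have um: "u \<in> borel_measurable M" using u by (rule Lp_space_measurable)
  have "Lp_nn_integral p I (Aop u) \<le> ennreal ((\<Lambda> * Lp_norm p I u) powr p)"
    using Lp_nn_integral_Aop_le[OF um] Lp_nn_integral_eq_Lp_norm_powr[OF u] p_ge_1 \<Lambda>_nonneg
    by (simp add: powr_mult ennreal_mult Lp_norm_nonneg)
  then show "Aop u \<in> Lp_space p I" "Lp_norm p I (Aop u) \<le> \<Lambda> * Lp_norm p I u"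
    using Lp_if_nn_integral_le[of "Aop u" I "\<Lambda> * Lp_norm p I u" p]
      Aop_measurable[OF um] p_ge_1 \<Lambda>_nonneg
    by (auto simp: Lp_norm_nonneg)
qed

lemma Aop_power_Lp:
  assumes b: "b \<in> Lp_space p I"
  shows "(Aop ^^ k) b \<in> Lp_space p I \<and> Lp_norm p I ((Aop ^^ k) b) \<le> \<Lambda> ^ k * Lp_norm p I b"
proof (induction k)
  case (Suc k)
  then have "Lp_norm p I (Aop ((Aop ^^ k) b)) \<le> \<Lambda> * (\<Lambda> ^ k * Lp_norm p I b)"
    using Aop_Lp(2)[of "(Aop ^^ k) b"] \<Lambda>_nonneg by (meson mult_left_mono order_trans)
  then show ?case using Aop_Lp(1)[of "(Aop ^^ k) b"] Suc by (simp add: mult.assoc)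
qed (use b in simp)

lemma Aop_power_measurable: "b \<in> Lp_space p I \<Longrightarrow> (Aop ^^ k) b \<in> borel_measurable M"
  using Aop_power_Lp Lp_space_measurable by blast

definition neumann_abs_sum :: "(real \<Rightarrow> real) \<Rightarrow> nat \<Rightarrow> real \<Rightarrow> real" where
  "neumann_abs_sum b K y = (\<Sum>k<K. \<bar>(Aop ^^ Suc k) b y\<bar>)"

lemma neumann_abs_sum_Lp:
  assumes b: "b \<in> Lp_space p I"
  shows "neumann_abs_sum b K \<in> Lp_space p I \<and>
    Lp_norm p I (neumann_abs_sum b K) \<le> Lp_norm p I b / (1 - \<Lambda>)"
proof -
  have "neumann_abs_sum b K \<in> Lp_space p I \<and>
    Lp_norm p I (neumann_abs_sum b K) \<le> (\<Sum>k<K. \<Lambda> ^ Suc k) * Lp_norm p I b"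
  proof (induction K)
    case 0
    then show ?case using Lp_zero by (simp add: neumann_abs_sum_def[abs_def])
  next
    case (Suc K)
    have split: "neumann_abs_sum b (Suc K) = (\<lambda>y. neumann_abs_sum b K y + \<bar>(Aop ^^ Suc K) b y\<bar>)"
      by (simp add: neumann_abs_sum_def[abs_def])
    have last: "(\<lambda>y. \<bar>(Aop ^^ Suc K) b y\<bar>) \<in> Lp_space p I"
      "Lp_norm p I (\<lambda>y. \<bar>(Aop ^^ Suc K) b y\<bar>) \<le> \<Lambda> ^ Suc K * Lp_norm p I b"
      using Lp_abs[of "(Aop ^^ Suc K) b"] Aop_power_Lp[OF b, of "Suc K"] by auto
    have "Lp_norm p I (neumann_abs_sum b (Suc K))
        \<le> Lp_norm p I (neumann_abs_sum b K) + Lp_norm p I (\<lambda>y. \<bar>(Aop ^^ Suc K) b y\<bar>)"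
      unfolding split by (rule Lp_add(2)[OF p_ge_1 conjunct1[OF Suc.IH] last(1)])
    also have "\<dots> \<le> (\<Sum>k<Suc K. \<Lambda> ^ Suc k) * Lp_norm p I b"
      using Suc.IH last(2) by (simp add: algebra_simps)
    finally show ?case using Lp_add(1)[OF p_ge_1 conjunct1[OF Suc.IH] last(1)] split by simp
  qed
  moreover have "(\<Sum>k<K. \<Lambda> ^ Suc k) \<le> 1 / (1 - \<Lambda>)"
  proof -
    have "(\<Sum>k<K. \<Lambda> ^ Suc k) \<le> (\<Sum>k<K. \<Lambda> ^ k)"
      using \<Lambda>_nonneg \<Lambda>_less_1 by (intro sum_mono) (simp add: power_le_one mult_left_le_one_le)
    also have "\<dots> = (1 - \<Lambda> ^ K) / (1 - \<Lambda>)" using \<Lambda>_less_1 by (simp add: sum_gp_strict)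
    also have "\<dots> \<le> 1 / (1 - \<Lambda>)" using \<Lambda>_nonneg \<Lambda>_less_1 by (intro divide_right_mono) auto
    finally show ?thesis .
  qed
  then have "(\<Sum>k<K. \<Lambda> ^ Suc k) * Lp_norm p I b \<le> Lp_norm p I b / (1 - \<Lambda>)"
    using mult_right_mono[OF _ Lp_norm_nonneg[of p I b]] by fastforce
  ultimately show ?thesis by linarith
qed

text \<open>\<open>neumann_bound b\<close> is the \<open>p\<close>-th power of the majorant \<open>\<Sum>k. \<bar>Aop\<^sup>k\<^sup>+\<^sup>1 b\<bar>\<close> of the
  Neumann series; monotone convergence makes it integrable, so the series converges absolutely
  almost everywhere.\<close>
definition neumann_bound :: "(real \<Rightarrow> real) \<Rightarrow> real \<Rightarrow> ennreal" where
  "neumann_bound b y = (SUP K. ennreal (neumann_abs_sum b K y powr p))"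

lemma nn_integral_neumann_bound_le:
  assumes b: "b \<in> Lp_space p I"
  shows "(\<integral>\<^sup>+y. neumann_bound b y \<partial>M) \<le> ennreal ((Lp_norm p I b / (1 - \<Lambda>)) powr p)"
proof -
  note [measurable] = Aop_power_measurable[OF b]
  have meas: "(\<lambda>y. ennreal (neumann_abs_sum b K y powr p)) \<in> borel_measurable M" for K
    unfolding neumann_abs_sum_def by measurable
  have "incseq (\<lambda>K. ennreal (neumann_abs_sum b K y powr p))" for y
    using p_ge_1 by (intro incseq_SucI ennreal_leI powr_mono2) (auto simp: neumann_abs_sum_def sum_nonneg)
  then have "(\<integral>\<^sup>+y. neumann_bound b y \<partial>M) = (SUP K. (\<integral>\<^sup>+y. ennreal (neumann_abs_sum b K y powr p) \<partial>M))"
    unfolding neumann_bound_def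
    by (intro nn_integral_monotone_convergence_SUP) (auto simp: incseq_def le_fun_def meas)
  also have "\<dots> \<le> ennreal ((Lp_norm p I b / (1 - \<Lambda>)) powr p)"
  proof (rule SUP_least)
    fix K
    have "(\<integral>\<^sup>+y. ennreal (neumann_abs_sum b K y powr p) \<partial>M) = Lp_nn_integral p I (neumann_abs_sum b K)"
      unfolding Lp_nn_integral_def by (simp add: neumann_abs_sum_def sum_nonneg)
    also have "\<dots> = ennreal (Lp_norm p I (neumann_abs_sum b K) powr p)"
      using Lp_nn_integral_eq_Lp_norm_powr neumann_abs_sum_Lp[OF b] p_ge_1 by simp
    also have "\<dots> \<le> ennreal ((Lp_norm p I b / (1 - \<Lambda>)) powr p)"
      using neumann_abs_sum_Lp[OF b, of K] p_ge_1 Lp_norm_nonneg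
      by (intro ennreal_leI powr_mono2) auto
    finally show "(\<integral>\<^sup>+y. ennreal (neumann_abs_sum b K y powr p) \<partial>M) \<le> \<dots>" .
  qed
  finally show ?thesis .
qed

lemma AE_neumann_bound_finite:
  assumes b: "b \<in> Lp_space p I"
  shows "AE y in M. neumann_bound b y \<noteq> \<infinity>"
proof (rule nn_integral_PInf_AE)
  note [measurable] = Aop_power_measurable[OF b]
  show "neumann_bound b \<in> borel_measurable M"
    unfolding neumann_bound_def[abs_def] neumann_abs_sum_def by measurable
  show "(\<integral>\<^sup>+y. neumann_bound b y \<partial>M) \<noteq> \<infinity>"
    using nn_integral_neumann_bound_le[OF b] by (auto simp: top_unique)
qed

lemma neumann_abs_sum_powr_le:
  assumes fin: "neumann_bound b y \<noteq> \<infinity>"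
  shows "neumann_abs_sum b K y powr p \<le> enn2real (neumann_bound b y)"
proof -
  have "ennreal (neumann_abs_sum b K y powr p) \<le> neumann_bound b y"
    unfolding neumann_bound_def by (rule SUP_upper) simp
  then have "enn2real (ennreal (neumann_abs_sum b K y powr p)) \<le> enn2real (neumann_bound b y)"
    using fin by (intro enn2real_mono) (auto simp: top.not_eq_extremum)
  then show ?thesis by simp
qed

lemma summable_abs_Aop_power:
  assumes fin: "neumann_bound b y \<noteq> \<infinity>"
  shows "summable (\<lambda>k. \<bar>(Aop ^^ Suc k) b y\<bar>)"
proof (rule summableI_nonneg_bounded)
  fix K
  have "neumann_abs_sum b K y = (neumann_abs_sum b K y powr p) powr (1 / p)"
    using p_ge_1 by (simp add: powr_powr neumann_abs_sum_def sum_nonneg)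
  also have "\<dots> \<le> enn2real (neumann_bound b y) powr (1 / p)"
    using neumann_abs_sum_powr_le[OF fin] p_ge_1 by (intro powr_mono2) auto
  finally show "(\<Sum>k<K. \<bar>(Aop ^^ Suc k) b y\<bar>) \<le> enn2real (neumann_bound b y) powr (1 / p)"
    by (simp add: neumann_abs_sum_def)
qed simp

definition neumann :: "(real \<Rightarrow> real) \<Rightarrow> real \<Rightarrow> real" where
  "neumann b y = - (\<Sum>k. (Aop ^^ Suc k) b y)"

lemma abs_neumann_powr_le:
  assumes fin: "neumann_bound b y \<noteq> \<infinity>"
  shows "\<bar>neumann b y\<bar> powr p \<le> enn2real (neumann_bound b y)"
proof -
  have s: "summable (\<lambda>k. \<bar>(Aop ^^ Suc k) b y\<bar>)" by (rule summable_abs_Aop_power[OF fin])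
  have "\<bar>neumann b y\<bar> \<le> (\<Sum>k. \<bar>(Aop ^^ Suc k) b y\<bar>)"
    using summable_rabs[OF s] by (simp add: neumann_def)
  then have "\<bar>neumann b y\<bar> powr p \<le> (\<Sum>k. \<bar>(Aop ^^ Suc k) b y\<bar>) powr p"
    using p_ge_1 by (intro powr_mono2) auto
  also have "\<dots> \<le> enn2real (neumann_bound b y)"
  proof (rule LIMSEQ_le_const2)
    show "(\<lambda>K. neumann_abs_sum b K y powr p) \<longlonglongrightarrow> (\<Sum>k. \<bar>(Aop ^^ Suc k) b y\<bar>) powr p"
      unfolding neumann_abs_sum_def using summable_LIMSEQ[OF s] p_ge_1
      by (intro tendsto_powr') (auto intro: suminf_nonneg s)
  qed (use neumann_abs_sum_powr_le[OF fin] in auto)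
  finally show ?thesis .
qed

lemma neumann_Lp:
  assumes b: "b \<in> Lp_space p I"
  shows "neumann b \<in> Lp_space p I"
proof -
  note [measurable] = Aop_power_measurable[OF b]
  have meas: "neumann b \<in> borel_measurable M"
    unfolding neumann_def[abs_def] by measurable
  have "Lp_nn_integral p I (neumann b) \<le> (\<integral>\<^sup>+y. neumann_bound b y \<partial>M)"
    unfolding Lp_nn_integral_def
  proof (rule nn_integral_mono_AE)
    show "AE y in M. ennreal (\<bar>neumann b y\<bar> powr p) \<le> neumann_bound b y"
      using AE_neumann_bound_finite[OF b]
    proof eventually_elim
      case (elim y)
      then have "ennreal (\<bar>neumann b y\<bar> powr p) \<le> ennreal (enn2real (neumann_bound b y))"
        by (intro ennreal_leI abs_neumann_powr_le)
      also have "\<dots> = neumann_bound b y" using elim by (simp add: less_top)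
      finally show ?case .
    qed
  qed
  also have "\<dots> < \<infinity>"
    using nn_integral_neumann_bound_le[OF b] by (simp add: le_less_trans)
  finally show ?thesis using meas by (simp add: Lp_space_iff_nn_integral)
qed

lemma neumann_fixed_point:
  assumes b: "b \<in> Lp_space p I"
  shows "AE y in M. neumann b y = Aop (\<lambda>t. neumann b t - b t) y"
  using AE_compose_Linv[OF AE_neumann_bound_finite[OF b]] AE_space
proof eventually_elim
  case (elim y)
  then have y: "y \<in> I" by simp
  define t where "t = Li (pidx y) y"
  define a where "a = \<alpha> (pidx y) t"
  have step: "Aop ((Aop ^^ k) b) y = a * (Aop ^^ k) b t" for k
    using y by (simp add: Aop_def a_def t_def)
  have "summable (\<lambda>k. (Aop ^^ Suc k) b t)"
    using summable_rabs_cancel[OF summable_abs_Aop_power] elim by (simp add: t_def)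
  then have s: "summable (\<lambda>k. (Aop ^^ k) b t)" by (subst summable_Suc_iff[symmetric])
  have "neumann b t - b t = - (\<Sum>k. (Aop ^^ k) b t)"
    using suminf_split_head[OF s] by (simp add: neumann_def)
  then have "Aop (\<lambda>t. neumann b t - b t) y = - (\<Sum>k. a * (Aop ^^ k) b t)"
    using y suminf_mult[OF s, of a] by (simp add: Aop_def a_def t_def)
  then show ?case by (simp add: step neumann_def)
qed

lemma fractal_T_zero_eq_Aop: "fractal_T x N \<alpha> (\<lambda>_. 0) b g y = Aop (\<lambda>t. g t - b t) y"
  by (simp add: fractal_T_def Aop_def Let_def)

lemma fractal_star_zero:
  assumes b: "b \<in> Lp_space p I"
  defines "h \<equiv> fractal_star p x N \<alpha> (\<lambda>_. 0) b"
  shows "h \<in> Lp_space p I" "AE y in M. h y = Aop (\<lambda>t. h t - b t) y"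
proof -
  have "\<exists>h. h \<in> Lp_space p I \<and> (AE y in M. h y = fractal_T x N \<alpha> (\<lambda>_. 0) b h y)"
    using neumann_Lp[OF b] neumann_fixed_point[OF b] by (auto simp: fractal_T_zero_eq_Aop)
  then have "h \<in> Lp_space p I \<and> (AE y in M. h y = fractal_T x N \<alpha> (\<lambda>_. 0) b h y)"
    unfolding h_def fractal_star_def by (rule someI_ex)
  then show "h \<in> Lp_space p I" "AE y in M. h y = Aop (\<lambda>t. h t - b t) y"
    by (simp_all add: fractal_T_zero_eq_Aop)
qed

definition Dop :: "(real \<Rightarrow> real) \<Rightarrow> real \<Rightarrow> real" where
  "Dop u y = u y - Aop u y"

lemma Dop_Lp:
  assumes u: "u \<in> Lp_space p I"
  shows "Dop u \<in> Lp_space p I" "Lp_norm p I (Dop u) \<le> (1 + \<Lambda>) * Lp_norm p I u"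
  using Lp_diff[OF p_ge_1 u Aop_Lp(1)[OF u]] Aop_Lp(2)[OF u]
  unfolding Dop_def[abs_def] by (auto simp: algebra_simps)

lemma Dop_norm_ge:
  assumes u: "u \<in> Lp_space p I"
  shows "(1 - \<Lambda>) * Lp_norm p I u \<le> Lp_norm p I (Dop u)"
proof -
  have "Lp_norm p I (\<lambda>y. Dop u y + Aop u y) \<le> Lp_norm p I (Dop u) + Lp_norm p I (Aop u)"
    by (rule Lp_add(2)[OF p_ge_1 Dop_Lp(1)[OF u] Aop_Lp(1)[OF u]])
  moreover have "(\<lambda>y. Dop u y + Aop u y) = u" by (simp add: Dop_def)
  ultimately show ?thesis using Aop_Lp(2)[OF u] by (simp add: algebra_simps)
qed

lemma Dop_minus_fractal_star:
  assumes b: "b \<in> Lp_space p I"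
  shows "AE y in M. Dop (\<lambda>y. b y - fractal_star p x N \<alpha> (\<lambda>_. 0) b y) y = b y"
  using fractal_star_zero(2)[OF b]
  by eventually_elim (simp add: Dop_def Aop_diff)

theorem schauder_sequence_minus_fractal_star:
  assumes basis: "schauder_basis_of p I (Lp_space p I) b"
  shows "schauder_sequence p I (\<lambda>m y. b m y - fractal_star p x N \<alpha> (\<lambda>_. 0) (b m) y)"
proof (rule schauder_sequence_transfer[OF p_ge_1 basis, where T=Dop and c="1 - \<Lambda>" and C="1 + \<Lambda>"])
  have b: "b m \<in> Lp_space p I" for m using basis unfolding schauder_basis_of_def by auto
  show "(\<lambda>y. b m y - fractal_star p x N \<alpha> (\<lambda>_. 0) (b m) y) \<in> Lp_space p I" for m
    by (rule Lp_diff(1)[OF p_ge_1 b fractal_star_zero(1)[OF b]])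
  show "AE y in M. Dop (\<lambda>y. b m y - fractal_star p x N \<alpha> (\<lambda>_. 0) (b m) y) y = b m y" for m
    by (rule Dop_minus_fractal_star[OF b])
qed (use Dop_Lp Dop_norm_ge \<Lambda>_less_1 in \<open>auto simp: Dop_def Aop_add Aop_mult algebra_simps\<close>)

end

lemma esssup_Max_less_1_obtains_bound:
  fixes f :: "'i \<Rightarrow> 'a \<Rightarrow> real"
  assumes S: "finite S" and less_1: "esssup M (\<lambda>y. Max ((\<lambda>n. ereal \<bar>f n y\<bar>) ` S)) < 1"
  obtains \<Lambda> where "0 \<le> \<Lambda>" "\<Lambda> < 1" "AE y in M. \<forall>n\<in>S. \<bar>f n y\<bar> \<le> \<Lambda>"
proof -
  obtain z where z: "esssup M (\<lambda>y. Max ((\<lambda>n. ereal \<bar>f n y\<bar>) ` S)) < z" "z < 1"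
    using dense[OF less_1] by blast
  then obtain r where r: "z = ereal r" by (cases z) auto
  have "AE y in M. \<forall>n\<in>S. \<bar>f n y\<bar> \<le> max r 0"
    using esssup_AE[of "\<lambda>y. Max ((\<lambda>n. ereal \<bar>f n y\<bar>) ` S)" M]
  proof eventually_elim
    case (elim y)
    have "ereal \<bar>f n y\<bar> < ereal r" if "n \<in> S" for n
    proof -
      have "ereal \<bar>f n y\<bar> \<le> Max ((\<lambda>n. ereal \<bar>f n y\<bar>) ` S)" by (rule Max_ge) (use S that in auto)
      also have "\<dots> < ereal r" using elim z r by simp
      finally show ?thesis .
    qed
    then show ?case by (simp add: le_max_iff_disj less_imp_le)
  qed
  moreover have "max r 0 < 1" using z r by simp
  ultimately show ?thesis using that[of "max r 0"] by simp
qed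

theorem corollary6p7:
  fixes N :: nat and x :: "nat \<Rightarrow> real" and \<alpha> :: "nat \<Rightarrow> real \<Rightarrow> real"
    and p :: real and b :: "nat \<Rightarrow> real \<Rightarrow> real"
  assumes "N \<ge> 2"
    and "\<forall>k<N. x k < x (Suc k)"
    and "\<forall>n\<in>{1..N}. \<alpha> n \<in> borel_measurable (lebesgue_on {x 0..x N})"
    and "esssup (lebesgue_on {x 0..x N}) (\<lambda>y. Max ((\<lambda>n. ereal \<bar>\<alpha> n y\<bar>) ` {1..N})) < 1"
    and "1 \<le> p"
    and "schauder_basis_of p {x 0..x N} (Lp_space p {x 0..x N}) b"
  shows "schauder_sequence p {x 0..x N}
           (\<lambda>m y. b m y - fractal_star p x N \<alpha> (\<lambda>_. 0) (b m) y)"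
proof -
  obtain \<Lambda> where "0 \<le> \<Lambda>" "\<Lambda> < 1"
    "AE t in lebesgue_on {x 0..x N}. \<forall>n\<in>{1..N}. \<bar>\<alpha> n t\<bar> \<le> \<Lambda>"
    using esssup_Max_less_1_obtains_bound[OF _ assms(4)] by blast
  then interpret fractal_operator x N \<alpha> p \<Lambda>
    by unfold_locales (use assms in auto)
  show ?thesis by (rule schauder_sequence_minus_fractal_star[OF assms(6)])
qed

end
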